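(* Let $n\ge2$, $m=n-1$, $c\in\mathbb{R}^{m^2}$, and let $\overline{Q}_1$ be the polytope defined by constraints (1)–(8): (1) $\sum_{r=1}^m w_{ir}=1$, $i=1,\dots,m$; (2) $\sum_{i=1}^m w_{ir}=1$, $r=1,\dots,m$; (3) $w_{ir}\ge0$; (4) $y_{0,i}=w_{i,1}$; (5) $y_{i,0}=w_{i,m}$; (6) $w_{ir}+w_{j,r+1}-y_{ij}\le1$ for $i\ne j\in\{1,\dots,m\}$, $r\le m-1$; (7) $\sum_{i=1}^m\sum_{j\ne i,j=1}^m y_{ij}=m-1$; (8) $y_{ij}\ge0$ for all distinct $i,j\in\{0,\dots,m\}$. Then $(w^*,y^* )$ is an optimal solution of the problem $\min\{\sum_{i,r}c_{ir}w_{ir}:(w,y)\in\overline{Q}_1\}$ if and only if $(w^*,y^* )\in\overline{Q}_1$ and $w^*$ is an optimal solution of $\min\{c^t w: w\in\mathcal{A}_n\}$.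
   Context: $\mathcal{A}_n\subseteq\mathbb{R}^{m^2}$ is the linear assignment (Birkhoff) polytope, the set of $w$ satisfying (1)–(3). $y$ is indexed by ordered pairs of distinct elements of $\{0,1,\dots,m\}$. *)

theory Defs
  imports Main "HOL-Library.Library"
begin

definition assign_poly :: "nat \<Rightarrow> (nat \<Rightarrow> nat \<Rightarrow> real) set" where
  "assign_poly m = {w.
     (\<forall>i\<in>{1..m}. (\<Sum>r=1..m. w i r) = 1) \<and>
     (\<forall>r\<in>{1..m}. (\<Sum>i=1..m. w i r) = 1) \<and>
     (\<forall>i\<in>{1..m}. \<forall>r\<in>{1..m}. w i r \<ge> 0)}"

definition Q1bar :: "nat \<Rightarrow> ((nat \<Rightarrow> nat \<Rightarrow> real) \<times> (nat \<Rightarrow> nat \<Rightarrow> real)) set" where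
  "Q1bar m = {(w, y).
     w \<in> assign_poly m \<and>
     (\<forall>i\<in>{1..m}. y 0 i = w i 1) \<and>
     (\<forall>i\<in>{1..m}. y i 0 = w i m) \<and>
     (\<forall>i\<in>{1..m}. \<forall>j\<in>{1..m}. \<forall>r\<in>{1..m-1}. i \<noteq> j \<longrightarrow>
         w i r + w j (r+1) - y i j \<le> 1) \<and>
     (\<Sum>i=1..m. \<Sum>j\<in>{1..m}-{i}. y i j) = real m - 1 \<and>
     (\<forall>i\<in>{0..m}. \<forall>j\<in>{0..m}. i \<noteq> j \<longrightarrow> y i j \<ge> 0)}"

definition lin_cost :: "nat \<Rightarrow> (nat \<Rightarrow> nat \<Rightarrow> real) \<Rightarrow> (nat \<Rightarrow> nat \<Rightarrow> real) \<Rightarrow> real" where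
  "lin_cost m c w = (\<Sum>i=1..m. \<Sum>r=1..m. c i r * w i r)"

end

theory Submission
  imports Defs
begin

text \<open>The constraints (4)--(8) do not restrict \<open>w\<close>: every doubly stochastic \<open>w\<close> extends to a
  point of Q1-bar by taking \<open>y i j = \<Sum>\<^sub>r w i r * w j (r+1)\<close> (the mass that \<open>w\<close> puts on
  "\<open>j\<close> directly follows \<open>i\<close>"), since \<open>w i r + w j (r+1) - 1 \<le> w i r * w j (r+1)\<close> for entries
  in \<open>[0,1]\<close>. Over all pairs \<open>(i,j)\<close> these weights sum to \<open>m - 1\<close>; the part sitting on the
  diagonal is moved onto the single pair \<open>(1,2)\<close> to satisfy (7). Hence the projection of
  Q1-bar onto \<open>w\<close> is the assignment polytope, and minimising a cost depending only on \<open>w\<close>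
  over either set is the same problem.\<close>

lemma assign_poly_nonneg:
  "w \<in> assign_poly m \<Longrightarrow> i \<in> {1..m} \<Longrightarrow> r \<in> {1..m} \<Longrightarrow> 0 \<le> w i r"
  unfolding assign_poly_def by auto

lemma assign_poly_le_one:
  assumes w: "w \<in> assign_poly m" and "i \<in> {1..m}" "r \<in> {1..m}"
  shows "w i r \<le> 1"
proof -
  have "w i r \<le> (\<Sum>r'=1..m. w i r')"
    using assms by (intro member_le_sum) (auto intro: assign_poly_nonneg[OF w])
  also have "\<dots> = 1" using w assms unfolding assign_poly_def by auto
  finally show ?thesis .
qed

definition succ_weight :: "nat \<Rightarrow> (nat \<Rightarrow> nat \<Rightarrow> real) \<Rightarrow> nat \<Rightarrow> nat \<Rightarrow> real" where
  "succ_weight m w i j = (\<Sum>r=1..m-1. w i r * w j (r+1))"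

lemma succ_weight_nonneg:
  "w \<in> assign_poly m \<Longrightarrow> i \<in> {1..m} \<Longrightarrow> j \<in> {1..m} \<Longrightarrow> 0 \<le> succ_weight m w i j"
  unfolding succ_weight_def by (intro sum_nonneg) (auto intro!: mult_nonneg_nonneg assign_poly_nonneg)

lemma succ_weight_lower_bound:
  assumes w: "w \<in> assign_poly m" and ij: "i \<in> {1..m}" "j \<in> {1..m}" and r: "r \<in> {1..m-1}"
  shows "w i r + w j (r+1) - 1 \<le> succ_weight m w i j"
proof -
  have "r \<in> {1..m}" "r + 1 \<in> {1..m}" using r by auto
  note entries = assign_poly_nonneg[OF w] assign_poly_le_one[OF w]
  have "0 \<le> (1 - w i r) * (1 - w j (r+1))"
    using ij \<open>r \<in> {1..m}\<close> \<open>r + 1 \<in> {1..m}\<close> entries by (intro mult_nonneg_nonneg) auto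
  hence "w i r + w j (r+1) - 1 \<le> w i r * w j (r+1)" by (simp add: algebra_simps)
  also have "\<dots> \<le> succ_weight m w i j"
    unfolding succ_weight_def using ij r
    by (intro member_le_sum) (auto intro!: mult_nonneg_nonneg assign_poly_nonneg[OF w])
  finally show ?thesis .
qed

lemma sum_succ_weight:
  assumes w: "w \<in> assign_poly m" and m: "m \<ge> 1"
  shows "(\<Sum>i=1..m. \<Sum>j=1..m. succ_weight m w i j) = real m - 1"
proof -
  have col: "(\<Sum>i=1..m. w i r) = 1" if "r \<in> {1..m}" for r
    using w that unfolding assign_poly_def by auto
  have "(\<Sum>i=1..m. \<Sum>j=1..m. succ_weight m w i j)
      = (\<Sum>r=1..m-1. \<Sum>i=1..m. \<Sum>j=1..m. w i r * w j (r+1))"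
  proof -
    have "(\<Sum>i=1..m. \<Sum>j=1..m. succ_weight m w i j)
        = (\<Sum>i=1..m. \<Sum>r=1..m-1. \<Sum>j=1..m. w i r * w j (r+1))"
      unfolding succ_weight_def by (rule sum.cong[OF refl]) (rule sum.swap)
    also have "\<dots> = (\<Sum>r=1..m-1. \<Sum>i=1..m. \<Sum>j=1..m. w i r * w j (r+1))"
      by (rule sum.swap)
    finally show ?thesis .
  qed
  also have "\<dots> = (\<Sum>r=1..m-1. (\<Sum>i=1..m. w i r) * (\<Sum>j=1..m. w j (r+1)))"
    by (simp add: sum_product)
  also have "\<dots> = (\<Sum>r=1..m-1. 1)"
  proof (rule sum.cong[OF refl])
    fix r assume "r \<in> {1..m-1}"
    hence "r \<in> {1..m}" "r + 1 \<in> {1..m}" by auto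
    thus "(\<Sum>i=1..m. w i r) * (\<Sum>j=1..m. w j (r+1)) = 1" by (simp only: col mult_1)
  qed
  finally show ?thesis using m by simp
qed

lemma assign_poly_extends_to_Q1bar:
  assumes w: "w \<in> assign_poly m" and m: "m \<ge> 1"
  shows "\<exists>y. (w, y) \<in> Q1bar m"
proof -
  define P where "P = succ_weight m w"
  define D where "D = (\<Sum>k=1..m. P k k)"
  define y where "y i j = (if i = 0 then w j 1 else if j = 0 then w i m
      else P i j + (if i = 1 \<and> j = 2 then D else 0))" for i j
  have P_nonneg: "0 \<le> P i j" if "i \<in> {1..m}" "j \<in> {1..m}" for i j
    using succ_weight_nonneg[OF w that] by (simp add: P_def)
  have D_nonneg: "0 \<le> D" unfolding D_def by (intro sum_nonneg) (auto intro: P_nonneg)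
  have slack_sum: "(\<Sum>i=1..m. \<Sum>j\<in>{1..m}-{i}. if i = 1 \<and> j = 2 then D else 0) = D"
  proof (cases "m \<ge> 2")
    case True
    have "(\<Sum>i=1..m. \<Sum>j\<in>{1..m}-{i}. if i = 1 \<and> j = 2 then D else 0)
        = (\<Sum>i=1..m. if i = 1 then D else 0)"
      using True by (intro sum.cong refl) (auto simp: sum.delta)
    also have "\<dots> = D" using True by (simp add: sum.delta)
    finally show ?thesis .
  next
    case False
    hence "m = 1" using m by simp
    thus ?thesis by (simp add: D_def P_def succ_weight_def)
  qed
  have split_diag: "(\<Sum>j=1..m. P i j) = P i i + (\<Sum>j\<in>{1..m}-{i}. P i j)" if "i \<in> {1..m}" for i
    using that by (intro sum.remove) auto
  have "(\<Sum>i=1..m. \<Sum>j\<in>{1..m}-{i}. y i j)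
      = (\<Sum>i=1..m. \<Sum>j\<in>{1..m}-{i}. P i j) + D"
    unfolding y_def using slack_sum by (simp add: sum.distrib)
  also have "\<dots> = (\<Sum>i=1..m. P i i + (\<Sum>j\<in>{1..m}-{i}. P i j))"
    by (simp add: D_def sum.distrib)
  also have "\<dots> = (\<Sum>i=1..m. \<Sum>j=1..m. P i j)"
    by (rule sum.cong[OF refl]) (rule split_diag[symmetric])
  also have "\<dots> = real m - 1" using sum_succ_weight[OF w m] by (simp add: P_def)
  finally have total: "(\<Sum>i=1..m. \<Sum>j\<in>{1..m}-{i}. y i j) = real m - 1" .
  have succ: "w i r + w j (r+1) - y i j \<le> 1"
    if "i \<in> {1..m}" "j \<in> {1..m}" "r \<in> {1..m-1}" for i j r
    using succ_weight_lower_bound[OF w that] that D_nonneg by (auto simp: y_def P_def)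
  have y_nonneg: "0 \<le> y i j" if "i \<in> {0..m}" "j \<in> {0..m}" "i \<noteq> j" for i j
    using that D_nonneg P_nonneg m by (auto simp: y_def intro!: assign_poly_nonneg[OF w])
  have "(w, y) \<in> Q1bar m"
    unfolding Q1bar_def using w total succ y_nonneg by (auto simp: y_def)
  thus ?thesis by blast
qed

lemma fst_Q1bar:
  assumes "m \<ge> 1"
  shows "fst ` Q1bar m = assign_poly m"
proof
  show "fst ` Q1bar m \<subseteq> assign_poly m" unfolding Q1bar_def by auto
  show "assign_poly m \<subseteq> fst ` Q1bar m"
    using assign_poly_extends_to_Q1bar[OF _ assms] by force
qed

theorem lemma3:
  fixes n m :: nat and c ws ys :: "nat \<Rightarrow> nat \<Rightarrow> real"
  assumes "n \<ge> 2" and "m = n - 1"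
  shows "((ws, ys) \<in> Q1bar m \<and>
          (\<forall>(w, y) \<in> Q1bar m. lin_cost m c ws \<le> lin_cost m c w))
         \<longleftrightarrow>
         ((ws, ys) \<in> Q1bar m \<and>
          ws \<in> assign_poly m \<and> (\<forall>w \<in> assign_poly m. lin_cost m c ws \<le> lin_cost m c w))"
proof -
  have proj: "fst ` Q1bar m = assign_poly m" using assms by (intro fst_Q1bar) simp
  have "(\<forall>(w, y) \<in> Q1bar m. lin_cost m c ws \<le> lin_cost m c w)
      \<longleftrightarrow> (\<forall>w \<in> fst ` Q1bar m. lin_cost m c ws \<le> lin_cost m c w)"
    by auto
  moreover have "(ws, ys) \<in> Q1bar m \<Longrightarrow> ws \<in> assign_poly m"
    using proj by force
  ultimately show ?thesis using proj by auto
qed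

end
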